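(* Let $J$ be a $\times d$-invariant set. For $x\in\mathbb{R}$ let $J_x=\{t-x:t\in J\}$. If $x\in\mathbb{R}$ is such that $\mathbb{Q}\cap J_x\neq\emptyset$, then $\mathbb{Q}\cap J_x$ is dense in $J_x$, and there exists $K<\infty$ such that every point $y\in J_x$ is intrinsically approximable (relative to $J_x$) with respect to the constant function $\psi(q)=K$.
   Context: Fix an integer $d\ge2$ and $E\subseteq\{0,\dots,d-1\}$ with $1<\#E<d$. The $\times d$-invariant set is $J=\{x\in[0,1]: x=\sum_{i\ge1}a_id^{-i}\text{ with all }a_i\in E\}$. For $S\subseteq\mathbb{R}$ and $\psi:\mathbb{N}\to(0,\infty)$, a point $y\in S$ is intrinsically approximable with respect to $\psi$ if there are infinitely many rationals $p/q\in\mathbb{Q}\cap S$ (lowest terms, $q\ge1$) with $|y-p/q|\le\psi(q)/q$. *)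

theory Defs
  imports "HOL-Analysis.Analysis"
begin

text \<open>The times-d invariant set: reals in [0,1] with a base-d expansion using only digits from E
  (digits indexed from 0 here, corresponding to a_{i+1} d^{-(i+1)}).\<close>
definition digit_set :: "nat \<Rightarrow> nat set \<Rightarrow> real set" where
  "digit_set d E = {x. \<exists>a::nat \<Rightarrow> nat. (\<forall>i. a i \<in> E) \<and>
                        x = (\<Sum>i. real (a i) / real d ^ (i + 1))}"

definition shift_set :: "real set \<Rightarrow> real \<Rightarrow> real set" where
  "shift_set J x = {t - x | t. t \<in> J}"

definition intrinsically_approximable :: "real set \<Rightarrow> (nat \<Rightarrow> real) \<Rightarrow> real \<Rightarrow> bool" where
  "intrinsically_approximable S psi y \<longleftrightarrow> y \<in> S \<and>
     infinite {(p::int, q::nat). q \<ge> 1 \<and> coprime p (int q) \<and>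
                 real_of_int p / real q \<in> S \<and>
                 \<bar>y - real_of_int p / real q\<bar> \<le> psi q / real q}"

end

theory Submission
  imports Defs
begin

(*
  Write J = digit_set d E and S = J - x, and fix a rational point
  z = u/v of S, coming from a digit sequence a.  Given y in S with digits c and a
  depth n, splice the digit sequences: keep c below position n, put a digit e of E
  at position n, and copy a above n.  Since E has two distinct digits, some choice
  of e yields a point w of S different from y.  Agreeing with c below n puts w
  within 2/d^n of y; agreeing with a from position n+1 on makes w - z a fraction
  with denominator d^(n+1), so w = m/(v d^(n+1)).  Reducing w to lowest terms p/q
  gives q <= v d^(n+1), hence |y - p/q| <= 2/d^n <= K/q with K = 2 d v.

  So y is a limit point of the rationals p/q (in lowest terms) of S with
  |y - p/q| <= K/q.  This gives density of the rationals of S, and, because a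
  finite set has no limit points, infinitely many such pairs (p, q).
*)

definition digit_value :: "nat \<Rightarrow> (nat \<Rightarrow> nat) \<Rightarrow> real" where
  "digit_value d a = (\<Sum>i. real (a i) / real d ^ (i + 1))"

lemma digit_set_eq: "digit_set d E = {digit_value d a | a. \<forall>i. a i \<in> E}"
  unfolding digit_set_def digit_value_def by blast

lemma summable_digit_series:
  assumes "d \<ge> 2" "\<forall>i. a i < d"
  shows "summable (\<lambda>i. real (a i) / real d ^ (i + 1))"
proof (rule summable_comparison_test')
  show "summable (\<lambda>i. (1 / real d) ^ i)" using assms(1) by (intro summable_geometric) auto
  fix i
  have "real (a i) / real d ^ (i + 1) \<le> real d / real d ^ (i + 1)"
    using assms less_imp_le by (intro divide_right_mono) auto
  also have "\<dots> = (1 / real d) ^ i" using assms(1) by (simp add: power_divide)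
  finally show "norm (real (a i) / real d ^ (i + 1)) \<le> (1 / real d) ^ i" by simp
qed

lemma digit_value_diff:
  assumes "d \<ge> 2" "\<forall>i. a i < d" "\<forall>i. b i < d"
  shows "digit_value d b - digit_value d a = (\<Sum>i. (real (b i) - real (a i)) / real d ^ (i + 1))"
  using suminf_diff[OF summable_digit_series[OF assms(1,3)] summable_digit_series[OF assms(1,2)]]
  by (simp add: digit_value_def diff_divide_distrib)

lemma sum_over_powers_int:
  "\<exists>k::int. (\<Sum>i<N. real_of_int (z i) / real d ^ (i + 1)) = real_of_int k / real d ^ N"
proof (induction N)
  case 0
  show ?case by simp
next
  case (Suc N)
  then obtain k where k: "(\<Sum>i<N. real_of_int (z i) / real d ^ (i + 1)) = real_of_int k / real d ^ N"
    by blast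
  show ?case
  proof (cases "d = 0")
    case True
    then show ?thesis by simp
  next
    case False
    show ?thesis
      by (intro exI[of _ "k * int d + z N"]) (use False k in \<open>simp add: field_simps\<close>)
  qed
qed

lemma digit_value_diff_eventually_eq:
  assumes "d \<ge> 2" "\<forall>i. a i < d" "\<forall>i. b i < d" "\<forall>i\<ge>N. b i = a i"
  shows "\<exists>k::int. digit_value d b - digit_value d a = real_of_int k / real d ^ N"
proof -
  have "digit_value d b - digit_value d a = (\<Sum>i<N. (real (b i) - real (a i)) / real d ^ (i + 1))"
    unfolding digit_value_diff[OF assms(1-3)] by (rule suminf_finite) (use assms(4) in auto)
  then show ?thesis
    using sum_over_powers_int[of "\<lambda>i. int (b i) - int (a i)" d N] by simp
qed

lemma digit_value_close:
  assumes d: "d \<ge> 2" and b: "\<forall>i. b i < d" and c: "\<forall>i. c i < d" and agree: "\<forall>i<n. b i = c i"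
  shows "\<bar>digit_value d b - digit_value d c\<bar> \<le> 2 / real d ^ n"
proof -
  define f where "f i = (real (b i) - real (c i)) / real d ^ (i + 1)" for i
  define g where "g i = (1 / real d) ^ n * (1 / real d) ^ i" for i
  have f_summable: "summable f"
    unfolding f_def diff_divide_distrib
    using summable_diff[OF summable_digit_series[OF d b] summable_digit_series[OF d c]] .
  have g_sums: "g sums ((1 / real d) ^ n * (1 / (1 - 1 / real d)))"
    unfolding g_def using d by (intro sums_mult geometric_sums) auto
  have f_le_g: "\<bar>f (i + n)\<bar> \<le> g i" for i
  proof -
    have "real (b (i + n)) < real d" "real (c (i + n)) < real d"
      using b c of_nat_less_iff by blast+
    then have "\<bar>real (b (i + n)) - real (c (i + n))\<bar> \<le> real d" by linarith
    then have "\<bar>f (i + n)\<bar> \<le> real d / real d ^ (i + n + 1)"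
      unfolding f_def abs_divide power_abs abs_of_nat by (intro divide_right_mono) auto
    also have "\<dots> = g i" unfolding g_def using d by (simp add: power_divide power_add)
    finally show ?thesis .
  qed
  have abs_summable: "summable (\<lambda>i. \<bar>f (i + n)\<bar>)"
    using f_le_g sums_summable[OF g_sums] by (intro summable_rabs_comparison_test[of _ g]) auto
  have "sum f {..<n} = 0" using agree by (simp add: f_def)
  then have "digit_value d b - digit_value d c = (\<Sum>i. f (i + n))"
    using digit_value_diff[OF d c b] suminf_split_initial_segment[OF f_summable, of n]
    unfolding f_def[symmetric] by simp
  also have "\<bar>\<dots>\<bar> \<le> (\<Sum>i. \<bar>f (i + n)\<bar>)"
    using abs_summable by (rule summable_rabs)
  also have "\<dots> \<le> suminf g"
    using f_le_g abs_summable sums_summable[OF g_sums] by (rule suminf_le)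
  also have "\<dots> = (1 / real d) ^ n * (1 / (1 - 1 / real d))" using g_sums sums_unique by metis
  also have "\<dots> \<le> (1 / real d) ^ n * 2"
    using d by (intro mult_left_mono) (auto simp: field_simps)
  finally show ?thesis by (simp add: power_divide)
qed

lemma lowest_terms_bounded_denominator:
  fixes m :: int and M :: nat
  assumes "M > 0"
  shows "\<exists>p q. 1 \<le> q \<and> q \<le> M \<and> coprime p (int q) \<and>
    real_of_int m / real M = real_of_int p / real q"
proof -
  define g where "g = gcd m (int M)"
  define p where "p = m div g"
  define q where "q = nat (int M div g)"
  have g_pos: "g > 0" unfolding g_def using assms by simp
  have m_eq: "m = p * g" unfolding p_def g_def by simp
  have M_eq: "int M = int q * g"
    unfolding q_def g_def using g_def g_pos by (simp add: pos_imp_zdiv_nonneg_iff)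
  have "coprime p (int M div g)" unfolding p_def g_def
    by (rule div_gcd_coprime) (use assms in auto)
  then have coprime_pq: "coprime p (int q)" using M_eq g_pos by simp
  have q_ge1: "q \<ge> 1" using M_eq assms g_pos by (cases q) auto
  have "int q * 1 \<le> int q * g" using g_pos by (intro mult_left_mono) auto
  then have q_le: "q \<le> M" using M_eq by simp
  have "real M = real q * real_of_int g" using M_eq by (metis of_int_mult of_int_of_nat_eq)
  then have "real_of_int m / real M = real_of_int p / real q" using m_eq g_pos by simp
  with q_ge1 q_le coprime_pq show ?thesis by blast
qed

text \<open>If y is a limit point of the lowest-terms approximants allowed by the definition
  of intrinsic approximability, then y is intrinsically approximable: a finite set of
  pairs would have a finite, hence limit-point-free, set of values.\<close>

lemma intrinsically_approximable_if_islimpt: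
  assumes "y \<in> S"
    and "y islimpt (\<lambda>(p, q). real_of_int p / real q) `
      {(p::int, q::nat). q \<ge> 1 \<and> coprime p (int q) \<and> real_of_int p / real q \<in> S \<and>
         \<bar>y - real_of_int p / real q\<bar> \<le> psi q / real q}"
  shows "intrinsically_approximable S psi y"
  using assms islimpt_finite finite_imageI unfolding intrinsically_approximable_def by blast

definition splice :: "(nat \<Rightarrow> nat) \<Rightarrow> nat \<Rightarrow> nat \<Rightarrow> (nat \<Rightarrow> nat) \<Rightarrow> nat \<Rightarrow> nat" where
  "splice c n e a i = (if i < n then c i else if i = n then e else a i)"

text \<open>With two distinct digits available, some splice has a value different from
  that of c, since the two splices differ by a nonzero amount.\<close>

lemma splice_value_differs:
  assumes d: "d \<ge> 2" and E: "E \<subseteq> {0..<d}" and e12: "e1 \<in> E" "e2 \<in> E" "e1 \<noteq> e2"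
    and a: "\<forall>i. a i \<in> E" and c: "\<forall>i. c i \<in> E"
  shows "\<exists>e\<in>E. digit_value d (splice c n e a) \<noteq> digit_value d c"
proof -
  have digits: "\<forall>i. splice c n e a i < d" if "e \<in> E" for e
    using that a c E by (auto simp: splice_def subset_iff)
  have "digit_value d (splice c n e1 a) - digit_value d (splice c n e2 a)
      = (\<Sum>i. (real (splice c n e1 a i) - real (splice c n e2 a i)) / real d ^ (i + 1))"
    using digit_value_diff[OF d digits[OF e12(2)] digits[OF e12(1)]] .
  also have "\<dots> = (\<Sum>i\<in>{n}. (real (splice c n e1 a i) - real (splice c n e2 a i)) / real d ^ (i + 1))"
    by (rule suminf_finite) (auto simp: splice_def)
  also have "\<dots> = (real e1 - real e2) / real d ^ (n + 1)" by (simp add: splice_def)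
  also have "\<dots> \<noteq> 0" using e12 d by auto
  finally show ?thesis using e12 by (metis eq_iff_diff_eq_0)
qed

lemma nearby_point_of_shift_set:
  assumes d: "d \<ge> 2" and E: "E \<subseteq> {0..<d}" and e12: "e1 \<in> E" "e2 \<in> E" "e1 \<noteq> e2"
    and a: "\<forall>i. a i \<in> E" and v: "v > 0" and base: "digit_value d a - x = real_of_int u / real v"
    and y: "y \<in> shift_set (digit_set d E) x"
  shows "\<exists>w m. w \<in> shift_set (digit_set d E) x \<and> w \<noteq> y \<and>
           w = real_of_int m / real (v * d ^ (n + 1)) \<and> \<bar>y - w\<bar> \<le> 2 / real d ^ n"
proof -
  obtain c where c: "\<forall>i. c i \<in> E" and y_eq: "y = digit_value d c - x"
    using y unfolding shift_set_def digit_set_eq by blast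
  obtain e where e: "e \<in> E" and differs: "digit_value d (splice c n e a) \<noteq> digit_value d c"
    using splice_value_differs[OF d E e12 a c] by blast
  define b where "b = splice c n e a"
  define w where "w = digit_value d b - x"
  have in_E: "\<forall>i. b i \<in> E" using a c e by (simp add: b_def splice_def)
  have lt: "\<forall>i. f i < d" if "\<forall>i. f i \<in> E" for f :: "nat \<Rightarrow> nat" using that E by auto
  have tail: "\<forall>i\<ge>n + 1. b i = a i" by (simp add: b_def splice_def)
  obtain k where k: "digit_value d b - digit_value d a = real_of_int k / real d ^ (n + 1)"
    using digit_value_diff_eventually_eq[OF d lt[OF a] lt[OF in_E] tail] by blast
  have "w = real_of_int k / real d ^ (n + 1) + real_of_int u / real v"
    using k base unfolding w_def by simp
  also have "\<dots> = real_of_int (k * int v + u * int d ^ (n + 1)) / real (v * d ^ (n + 1))"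
    using d v by (simp add: field_simps)
  finally have w_frac: "w = real_of_int (k * int v + u * int d ^ (n + 1)) / real (v * d ^ (n + 1))" .
  have agree: "\<forall>i<n. b i = c i" by (simp add: b_def splice_def)
  have "\<bar>y - w\<bar> \<le> 2 / real d ^ n"
    using digit_value_close[OF d lt[OF in_E] lt[OF c] agree] y_eq
    unfolding w_def by (simp add: abs_minus_commute)
  moreover have "w \<in> shift_set (digit_set d E) x"
    unfolding shift_set_def digit_set_eq w_def using in_E by blast
  moreover have "w \<noteq> y" using differs y_eq unfolding w_def b_def by simp
  ultimately show ?thesis using w_frac by blast
qed

lemma islimpt_rational_approximants:
  assumes d: "d \<ge> 2" and E: "E \<subseteq> {0..<d}" and e12: "e1 \<in> E" "e2 \<in> E" "e1 \<noteq> e2"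
    and a: "\<forall>i. a i \<in> E" and v: "v > 0" and base: "digit_value d a - x = real_of_int u / real v"
    and y: "y \<in> shift_set (digit_set d E) x"
  shows "y islimpt (\<lambda>(p, q). real_of_int p / real q) `
      {(p::int, q::nat). q \<ge> 1 \<and> coprime p (int q) \<and>
         real_of_int p / real q \<in> shift_set (digit_set d E) x \<and>
         \<bar>y - real_of_int p / real q\<bar> \<le> 2 * real d * real v / real q}"
    (is "y islimpt ?f ` ?R")
  unfolding islimpt_approachable
proof (intro allI impI)
  fix \<epsilon> :: real
  assume "\<epsilon> > 0"
  then obtain n where "(1 / real d) ^ n < \<epsilon> / 2"
    using d real_arch_pow_inv[of "\<epsilon> / 2" "1 / real d"] by auto
  then have n: "2 / real d ^ n < \<epsilon>" by (simp add: power_divide)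
  obtain w m where w: "w \<in> shift_set (digit_set d E) x" "w \<noteq> y"
      "w = real_of_int m / real (v * d ^ (n + 1))" and close: "\<bar>y - w\<bar> \<le> 2 / real d ^ n"
    using nearby_point_of_shift_set[OF d E e12 a v base y] by blast
  have M_pos: "v * d ^ (n + 1) > 0" using v d by simp
  obtain p q where pq: "1 \<le> q" "q \<le> v * d ^ (n + 1)" "coprime p (int q)"
      and w_pq: "w = real_of_int p / real q"
    using lowest_terms_bounded_denominator[OF M_pos, of m] w(3) by metis
  have "2 / real d ^ n = 2 * real d * real v / real (v * d ^ (n + 1))"
    using v d by (simp add: field_simps)
  also have "\<dots> \<le> 2 * real d * real v / real q"
    using pq(1,2) M_pos by (intro divide_left_mono) (auto simp del: of_nat_mult)
  finally have "(p, q) \<in> ?R" using pq close w(1) w_pq by auto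
  then show "\<exists>w'\<in>?f ` ?R. w' \<noteq> y \<and> dist w' y < \<epsilon>"
    using w(2) w_pq close n by (intro bexI[of _ w]) (auto simp: dist_real_def)
qed

theorem lemma3p4:
  fixes d :: nat and E :: "nat set" and x :: real
  assumes "d \<ge> 2"
    and "E \<subseteq> {0..<d}"
    and "1 < card E" and "card E < d"
    and "\<rat> \<inter> shift_set (digit_set d E) x \<noteq> {}"
  shows "shift_set (digit_set d E) x \<subseteq> closure (\<rat> \<inter> shift_set (digit_set d E) x)
    \<and> (\<exists>K::real. K > 0 \<and> (\<forall>y \<in> shift_set (digit_set d E) x.
          intrinsically_approximable (shift_set (digit_set d E) x) (\<lambda>q. K) y))"
proof -
  define S where "S = shift_set (digit_set d E) x"
  obtain z where z: "z \<in> \<rat>" "z \<in> S" using assms(5) unfolding S_def by blast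
  obtain a where a: "\<forall>i. a i \<in> E" and z_eq: "z = digit_value d a - x"
    using z(2) unfolding S_def shift_set_def digit_set_eq by blast
  obtain u v' where v': "v' > 0" and z_frac: "z = real_of_int u / real_of_int v'"
    using z(1) Rats_cases' by metis
  define v where "v = nat v'"
  have v: "v > 0" and base: "digit_value d a - x = real_of_int u / real v"
    using v' z_frac z_eq by (simp_all add: v_def)
  have "finite E" using assms(2) finite_subset by blast
  then obtain e1 e2 where e12: "e1 \<in> E" "e2 \<in> E" "e1 \<noteq> e2"
    using assms(3) card_le_Suc0_iff_eq by (metis One_nat_def not_le)
  define K where "K = 2 * real d * real v"
  have limpt: "y islimpt (\<lambda>(p, q). real_of_int p / real q) `
      {(p::int, q::nat). q \<ge> 1 \<and> coprime p (int q) \<and> real_of_int p / real q \<in> S \<and>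
         \<bar>y - real_of_int p / real q\<bar> \<le> K / real q}" if "y \<in> S" for y
    using islimpt_rational_approximants[OF assms(1,2) e12 a v base] that
    unfolding S_def K_def by blast
  have "y \<in> closure (\<rat> \<inter> S)" if "y \<in> S" for y
  proof -
    have "y islimpt \<rat> \<inter> S" by (rule islimpt_subset[OF limpt[OF that]]) auto
    then show ?thesis unfolding closure_def by blast
  qed
  moreover have "intrinsically_approximable S (\<lambda>q. K) y" if "y \<in> S" for y
    using intrinsically_approximable_if_islimpt[OF that limpt[OF that]] .
  moreover have "K > 0" unfolding K_def using v assms(1) by simp
  ultimately show ?thesis unfolding S_def by blast
qed

end
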